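(* Let $\phi=(\phi_i)_{i\ge1}$ and $\psi=(\psi_i)_{i\ge1}$ be sequences of real numbers with $\psi_i>-2$ for all $i\ge1$. Define polynomials $\mathcal{H}_n^{\phi,\psi}$ by $\mathcal{H}_0^{\phi,\psi}=1$ and, for $n\ge0$, $$\mathcal{H}_{n+1}^{\phi,\psi}(x)=2x\mathcal{H}_n^{\phi,\psi}(x)-(\mathcal{H}_n^{\phi,\psi})'(x)+(\phi_{n+1}+x\psi_{n+1})\mathcal{H}_n^{\phi,\psi}(x).$$ Then for every $n\ge0$ the polynomial $\mathcal{H}_n^{\phi,\psi}$ has only real and simple zeros, and the zeros of $\mathcal{H}_{n+1}^{\phi,\psi}$ interlace the zeros of $\mathcal{H}_n^{\phi,\psi}$.
   Context: $\mathcal{H}_n^{\phi,\psi}$ has degree $n$ and leading coefficient $\prod_{i=1}^n(\psi_i+2)$. Interlacing: given two finite sets $U,V$ of real numbers, $U$ (strictly) interlaces $V$ if $\min U<\min V$ and between any two consecutive elements of either of the two sets there is an element of the other; "the zeros of $p$ interlace the zeros of $q$" means the corresponding sets of zeros satisfy this. *)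

theory Defs
  imports "HOL-Computational_Algebra.Polynomial"
begin

text \<open>The polynomials H_n^{phi,psi}; the sequences phi, psi are indexed from 1.\<close>
primrec Hpoly :: "(nat \<Rightarrow> real) \<Rightarrow> (nat \<Rightarrow> real) \<Rightarrow> nat \<Rightarrow> real poly" where
  "Hpoly phi psi 0 = 1"
| "Hpoly phi psi (Suc n) =
     [:0, 2:] * Hpoly phi psi n - pderiv (Hpoly phi psi n)
     + [:phi (Suc n), psi (Suc n):] * Hpoly phi psi n"

definition interlaces :: "real set \<Rightarrow> real set \<Rightarrow> bool" where
  "interlaces U V \<longleftrightarrow> finite U \<and> finite V \<and>
     (U \<noteq> {} \<and> V \<noteq> {} \<longrightarrow> Min U < Min V) \<and>
     (\<forall>a\<in>U. \<forall>b\<in>U. a < b \<and> (\<forall>c\<in>U. \<not> (a < c \<and> c < b)) \<longrightarrow> (\<exists>v\<in>V. a < v \<and> v < b)) \<and>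
     (\<forall>a\<in>V. \<forall>b\<in>V. a < b \<and> (\<forall>c\<in>V. \<not> (a < c \<and> c < b)) \<longrightarrow> (\<exists>u\<in>U. a < u \<and> u < b))"

definition real_zeros :: "real poly \<Rightarrow> real set" where
  "real_zeros p = {x. poly p x = 0}"

definition real_simple_zeros :: "real poly \<Rightarrow> bool" where
  "real_simple_zeros p \<longleftrightarrow> p \<noteq> 0 \<and>
     (\<forall>z::complex. poly (map_poly complex_of_real p) z = 0 \<longrightarrow>
        Im z = 0 \<and> order z (map_poly complex_of_real p) = 1)"

end

(*
  Suppose H_n has positive leading coefficient and n distinct real zeros
  x_0 < ... < x_{n-1}. Then H_n' has sign (-1)^(n-1-k) at x_k, hence
  H_{n+1}(x_k) = -H_n'(x_k) has sign (-1)^(n-k). As H_{n+1} has degree n+1 and leading coefficient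
  (psi_{n+1} + 2) lc(H_n) > 0, it also has sign (-1)^(n+1) far to the left and is positive far to
  the right. By the intermediate value theorem H_{n+1} vanishes in each of the n+1 gaps determined
  by the x_k, and by degree count these are all of its zeros: they interlace the x_k and are simple,
  even as complex zeros.
*)

theory Submission
  imports Defs
begin

lemma prod_linear_factors_dvd:
  fixes p :: "'a::idom poly"
  assumes "finite S" "\<And>r. r \<in> S \<Longrightarrow> poly p r = 0"
  shows "(\<Prod>r\<in>S. [:-r, 1:]) dvd p"
  using assms
proof (induction S arbitrary: p rule: finite_induct)
  case empty
  then show ?case by simp
next
  case (insert a S)
  then obtain q where q: "p = [:-a, 1:] * q"
    by (metis dvdE insertI1 poly_eq_0_iff_dvd)
  have "poly q r = 0" if "r \<in> S" for r
    using insert.prems[of r] insert.hyps(2) that by (auto simp: q)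
  then have "(\<Prod>r\<in>S. [:-r, 1:]) dvd q"
    by (rule insert.IH)
  then have "[:-a, 1:] * (\<Prod>r\<in>S. [:-r, 1:]) dvd p"
    unfolding q by (rule mult_dvd_mono[OF dvd_refl])
  then show ?case
    using insert.hyps by simp
qed

lemma poly_decompose_distinct_zeros:
  fixes p :: "'a::idom poly"
  assumes "p \<noteq> 0" "finite S" "\<And>r. r \<in> S \<Longrightarrow> poly p r = 0" "card S = degree p"
  shows "p = smult (lead_coeff p) (\<Prod>r\<in>S. [:-r, 1:])"
proof -
  obtain g where g: "p = (\<Prod>r\<in>S. [:-r, 1:]) * g"
    using prod_linear_factors_dvd[of S p] assms(2,3) by (auto elim: dvdE)
  with assms(1) have "g \<noteq> 0" by auto
  have "degree (\<Prod>r\<in>S. [:-r, 1:]) = card S"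
    by (simp add: degree_prod_sum_eq)
  moreover have "(\<Prod>r\<in>S. [:-r, 1:]) \<noteq> 0"
    using assms(2) by (simp add: prod_zero_iff)
  ultimately have "degree g = 0"
    using g assms(4) \<open>g \<noteq> 0\<close> by (simp add: degree_mult_eq)
  then obtain c where "g = [:c:]"
    by (rule degree_eq_zeroE)
  with g show ?thesis
    by (simp add: lead_coeff_mult lead_coeff_prod)
qed

lemma proots_eq_mset_set:
  fixes p :: "'a::idom poly"
  assumes "p \<noteq> 0" "S \<subseteq> {x. poly p x = 0}" "card S = degree p"
  shows "proots p = mset_set S"
proof -
  have "finite S"
    using assms(1,2) finite_subset poly_roots_finite by blast
  with assms(1,2) have sub: "mset_set S \<subseteq># proots p"
    by (auto simp: subseteq_mset_def count_mset_set' Suc_le_eq order_gt_0_iff)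
  have "size (proots p) \<le> size (mset_set S)"
    using size_proots_le[of p] assms(3) by simp
  with sub show ?thesis
    by (metis mset_subset_size not_le subset_mset.le_imp_less_or_eq)
qed

lemma poly_map_poly_of_real:
  "poly (map_poly of_real p) (of_real x) = (of_real (poly p x) :: 'a::{real_algebra_1,comm_ring_1})"
  by (induction p) (auto simp: map_poly_pCons)

lemma real_simple_zerosI:
  fixes p :: "real poly"
  assumes "p \<noteq> 0" "card (real_zeros p) = degree p"
  shows "real_simple_zeros p"
proof -
  define P where "P = map_poly complex_of_real p"
  define Z where "Z = complex_of_real ` real_zeros p"
  have P0: "P \<noteq> 0" and deg: "degree P = degree p"
    using assms(1) by (auto simp: P_def degree_map_poly map_poly_eq_0_iff)
  have "Z \<subseteq> {z. poly P z = 0}"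
    by (auto simp: Z_def P_def real_zeros_def poly_map_poly_of_real)
  moreover have "card Z = degree P"
    using assms(2) deg by (simp add: Z_def card_image inj_on_def)
  \<comment> \<open>The real zeros alone already exhaust the at most \<open>degree P\<close> complex zeros with multiplicity.\<close>
  ultimately have proots: "proots P = mset_set Z"
    by (rule proots_eq_mset_set[OF P0])
  have finZ: "finite Z"
    using poly_roots_finite[OF assms(1)] by (simp add: Z_def real_zeros_def)
  show ?thesis
    unfolding real_simple_zeros_def P_def[symmetric]
  proof (intro conjI allI impI)
    fix z assume "poly P z = 0"
    then have z: "z \<in> Z"
      using set_count_proots[OF P0] finZ by (simp add: proots)
    then show "Im z = 0"
      by (auto simp: Z_def)
    show "order z P = 1"
      using count_proots[OF P0, of z] z finZ by (simp add: proots)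
  qed (fact assms)
qed

lemma poly_pderiv_prod_linear_factors:
  fixes S :: "'a::idom set"
  assumes "finite S" "t \<in> S"
  shows "poly (pderiv (\<Prod>r\<in>S. [:-r, 1:])) t = (\<Prod>r\<in>S - {t}. t - r)"
proof -
  have "(\<Prod>r\<in>S. [:-r, 1:]) = [:-t, 1:] * (\<Prod>r\<in>S - {t}. [:-r, 1:])"
    using assms by (simp add: prod.remove)
  then have "poly (pderiv (\<Prod>r\<in>S. [:-r, 1:])) t =
      poly [:-t, 1:] t * poly (pderiv (\<Prod>r\<in>S - {t}. [:-r, 1:])) t
      + poly (\<Prod>r\<in>S - {t}. [:-r, 1:]) t * poly (pderiv [:-t, 1:]) t"
    by (simp only: pderiv_mult poly_add poly_mult)
  then show ?thesis
    by (simp add: pderiv_pCons poly_prod)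
qed

lemma sign_prod_diff:
  fixes A :: "real set"
  assumes "finite A" "t \<notin> A"
  shows "(-1) ^ card {a\<in>A. t < a} * (\<Prod>a\<in>A. t - a) > 0"
  using assms
proof (induction A rule: finite_induct)
  case empty
  then show ?case by simp
next
  case (insert b A)
  then have IH: "(-1) ^ card {a\<in>A. t < a} * (\<Prod>a\<in>A. t - a) > 0" and "t \<noteq> b"
    by auto
  show ?case
  proof (cases "t < b")
    case True
    then have "{a\<in>insert b A. t < a} = insert b {a\<in>A. t < a}"
      by auto
    with True IH insert.hyps show ?thesis
      by (simp add: mult_neg_pos mult_ac)
  next
    case False
    then have "{a\<in>insert b A. t < a} = {a\<in>A. t < a}"
      by auto
    with False \<open>t \<noteq> b\<close> IH insert.hyps show ?thesis
      by (simp add: mult_ac)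
  qed
qed

lemma sign_pderiv_at_zero:
  fixes p :: "real poly"
  assumes "lead_coeff p > 0" "card (real_zeros p) = degree p" "t \<in> real_zeros p"
  shows "(-1) ^ card {r\<in>real_zeros p. t < r} * poly (pderiv p) t > 0"
proof -
  let ?S = "real_zeros p"
  have p0: "p \<noteq> 0"
    using assms(1) by auto
  then have fin: "finite ?S"
    by (simp add: real_zeros_def poly_roots_finite)
  have "p = smult (lead_coeff p) (\<Prod>r\<in>?S. [:-r, 1:])"
    using poly_decompose_distinct_zeros[OF p0 fin _ assms(2)] by (simp add: real_zeros_def)
  then have "poly (pderiv p) t = lead_coeff p * (\<Prod>r\<in>?S - {t}. t - r)"
    by (metis pderiv_smult poly_smult poly_pderiv_prod_linear_factors[OF fin assms(3)])
  moreover have "{r\<in>?S. t < r} = {r\<in>?S - {t}. t < r}"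
    by auto
  moreover have "(-1) ^ card {r\<in>?S - {t}. t < r} * (\<Prod>r\<in>?S - {t}. t - r) > 0"
    using fin by (intro sign_prod_diff) auto
  ultimately show ?thesis
    using assms(1) by (simp add: mult.left_commute)
qed

lemma strict_mono_on_lessThanI:
  fixes f :: "nat \<Rightarrow> 'a::order"
  assumes "\<And>i. Suc i < m \<Longrightarrow> f i < f (Suc i)"
  shows "strict_mono_on {..<m} f"
proof (rule strict_mono_onI)
  fix i j assume "i \<in> {..<m}" "j \<in> {..<m}" "i < j"
  then have "{i..<j} \<subseteq> {k. Suc k < m}"
    by auto
  show "f i < f j"
    by (rule lift_Suc_mono_less_ivl[OF _ \<open>i < j\<close> \<open>{i..<j} \<subseteq> _\<close>]) (simp add: assms)
qed

lemma strict_mono_on_consecutive_values: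
  fixes f :: "nat \<Rightarrow> 'a::linorder"
  assumes mono: "strict_mono_on {..<m} f" and "i < m" "j < m" "f i < f j"
    and nothing_between: "\<forall>c\<in>f ` {..<m}. \<not> (f i < c \<and> c < f j)"
  shows "j = Suc i"
proof -
  have "i < j"
    using assms(2-4) strict_mono_on_less[OF mono] by simp
  moreover have "\<not> Suc i < j"
  proof
    assume "Suc i < j"
    then have "f i < f (Suc i)" "f (Suc i) < f j"
      using assms(3) strict_mono_on_less[OF mono] by auto
    with \<open>Suc i < j\<close> \<open>j < m\<close> nothing_between show False
      by auto
  qed
  ultimately show ?thesis
    by simp
qed

lemma finite_strict_mono_enumeration:
  fixes S :: "'a::linorder set"
  assumes "finite S"
  obtains x where "strict_mono_on {..<card S} x" "S = x ` {..<card S}"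
proof
  let ?xs = "sorted_list_of_set S"
  have len: "length ?xs = card S"
    by simp
  show "strict_mono_on {..<card S} ((!) ?xs)"
  proof (rule strict_mono_onI)
    fix i j assume "i \<in> {..<card S}" "j \<in> {..<card S}" "i < j"
    then show "?xs ! i < ?xs ! j"
      using assms sorted_wrt_nth_less[of "(<)" ?xs i j] by simp
  qed
  show "S = (!) ?xs ` {..<card S}"
    using assms by (simp add: set_conv_nth[of ?xs, unfolded len, symmetric] image_Collect lessThan_def)
qed

lemma sign_pderiv_at_kth_zero:
  fixes p :: "real poly" and x :: "nat \<Rightarrow> real"
  assumes "lead_coeff p > 0" and x_mono: "strict_mono_on {..<degree p} x"
    and zeros: "real_zeros p = x ` {..<degree p}" and "k < degree p"
  shows "(-1) ^ (degree p - Suc k) * poly (pderiv p) (x k) > 0"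
proof -
  let ?n = "degree p"
  have inj: "inj_on x {..<?n}"
    using x_mono by (rule strict_mono_on_imp_inj_on)
  have "{r\<in>real_zeros p. x k < r} = x ` {Suc k..<?n}"
    using assms(4) strict_mono_on_less[OF x_mono] by (auto simp: zeros Suc_le_eq)
  moreover have "inj_on x {Suc k..<?n}"
    using inj by (rule inj_on_subset) auto
  ultimately have "card {r\<in>real_zeros p. x k < r} = ?n - Suc k"
    by (simp add: card_image)
  moreover have "card (real_zeros p) = ?n"
    using inj by (simp add: zeros card_image)
  ultimately show ?thesis
    using sign_pderiv_at_zero[OF assms(1), of "x k"] assms(4) by (simp add: zeros)
qed

lemma interlaces_interleaved:
  fixes x y :: "nat \<Rightarrow> real"
  assumes xy: "\<And>i. i < n \<Longrightarrow> y i < x i \<and> x i < y (Suc i)"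
  shows "interlaces (y ` {..<Suc n}) (x ` {..<n})"
proof -
  have y_mono: "strict_mono_on {..<Suc n} y"
  proof (rule strict_mono_on_lessThanI)
    fix i assume "Suc i < Suc n"
    then show "y i < y (Suc i)"
      using xy[of i] by simp
  qed
  have x_mono: "strict_mono_on {..<n} x"
  proof (rule strict_mono_on_lessThanI)
    fix i assume "Suc i < n"
    then show "x i < x (Suc i)"
      using xy[of i] xy[of "Suc i"] by simp
  qed
  show ?thesis
    unfolding interlaces_def
  proof (intro conjI impI ballI)
    assume "y ` {..<Suc n} \<noteq> {} \<and> x ` {..<n} \<noteq> {}"
    then have "Min (x ` {..<n}) \<in> x ` {..<n}"
      by (intro Min_in) simp_all
    then obtain k where k: "k < n" "Min (x ` {..<n}) = x k"
      by blast
    have "Min (y ` {..<Suc n}) \<le> y k"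
      using k by (intro Min_le) auto
    also have "y k < x k"
      using xy k by blast
    finally show "Min (y ` {..<Suc n}) < Min (x ` {..<n})"
      using k by simp
  next
    fix a b assume "a \<in> y ` {..<Suc n}" "b \<in> y ` {..<Suc n}"
      and consecutive: "a < b \<and> (\<forall>c\<in>y ` {..<Suc n}. \<not> (a < c \<and> c < b))"
    then obtain i j where ij: "i < Suc n" "j < Suc n" and ab: "a = y i" "b = y j"
      by blast
    have "j = Suc i"
      using consecutive unfolding ab by (intro strict_mono_on_consecutive_values[OF y_mono ij]) simp_all
    with ij have "i < n"
      by simp
    with xy[of i] show "\<exists>v\<in>x ` {..<n}. a < v \<and> v < b"
      unfolding ab \<open>j = Suc i\<close> by blast
  next
    fix a b assume "a \<in> x ` {..<n}" "b \<in> x ` {..<n}"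
      and consecutive: "a < b \<and> (\<forall>c\<in>x ` {..<n}. \<not> (a < c \<and> c < b))"
    then obtain i j where ij: "i < n" "j < n" and ab: "a = x i" "b = x j"
      by blast
    have "j = Suc i"
      using consecutive unfolding ab by (intro strict_mono_on_consecutive_values[OF x_mono ij]) simp_all
    with ij have "x i < y j" "y j < x j" "j < Suc n"
      using xy[of i] xy[of j] by simp_all
    then show "\<exists>u\<in>y ` {..<Suc n}. a < u \<and> u < b"
      unfolding ab by blast
  qed simp_all
qed

lemma poly_sign_at_neg_infinity:
  fixes q :: "real poly"
  assumes "lead_coeff q > 0"
  shows "\<exists>M. \<forall>t\<le>M. (-1) ^ degree q * poly q t > 0"
proof -
  define r where "r = smult ((-1) ^ degree q) (pcompose q [:0, -1:])"
  have "lead_coeff r = lead_coeff q"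
    by (simp add: r_def lead_coeff_comp power_mult_distrib[symmetric])
  then obtain N where N: "\<forall>s\<ge>N. poly r s \<ge> lead_coeff q"
    using poly_pinfty_gt_lc assms by metis
  have "(-1) ^ degree q * poly q t > 0" if "t \<le> -N" for t
    using N[rule_format, of "-t"] that assms by (simp add: r_def poly_pcompose)
  then show ?thesis
    by blast
qed

lemma poly_signs_beyond:
  fixes q :: "real poly"
  assumes "lead_coeff q > 0" "a \<le> b"
  obtains L R where "L < a" "b < R" "(-1) ^ degree q * poly q L > 0" "poly q R > 0"
proof -
  obtain M where M: "\<forall>t\<le>M. (-1) ^ degree q * poly q t > 0"
    using poly_sign_at_neg_infinity[OF assms(1)] by blast
  obtain N where N: "\<forall>s\<ge>N. poly q s \<ge> lead_coeff q"
    using poly_pinfty_gt_lc[OF assms(1)] by blast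
  show ?thesis
  proof
    show "min M (a - 1) < a" "b < max N (b + 1)"
      by simp_all
    show "(-1) ^ degree q * poly q (min M (a - 1)) > 0"
      using M by simp
    show "poly q (max N (b + 1)) > 0"
      using N assms(1) by (meson max.cobounded1 order_less_le_trans)
  qed
qed

lemma alternating_signs_mult_neg:
  fixes u v :: real
  assumes "(-1) ^ Suc k * u > 0" "(-1) ^ k * v > 0"
  shows "u * v < 0"
  using assms by (cases "even k") (simp_all add: mult_neg_pos mult_pos_neg)

lemma zeros_between_sign_changes:
  fixes q :: "real poly" and t :: "nat \<Rightarrow> real"
  assumes "q \<noteq> 0" "degree q = m"
    and sign_change: "\<And>i. i < m \<Longrightarrow> t i < t (Suc i) \<and> poly q (t i) * poly q (t (Suc i)) < 0"
  obtains r where "\<And>i. i < m \<Longrightarrow> t i < r i \<and> r i < t (Suc i)"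
    "strict_mono_on {..<m} r" "real_zeros q = r ` {..<m}"
proof -
  have "\<exists>z. t i < z \<and> z < t (Suc i) \<and> poly q z = 0" if "i < m" for i
    using poly_IVT[of "t i" "t (Suc i)" q] sign_change[OF that] by auto
  then obtain r where r: "\<And>i. i < m \<Longrightarrow> t i < r i \<and> r i < t (Suc i) \<and> poly q (r i) = 0"
    by metis
  have mono: "strict_mono_on {..<m} r"
  proof (rule strict_mono_on_lessThanI)
    fix i assume "Suc i < m"
    then show "r i < r (Suc i)"
      using r[of i] r[of "Suc i"] by simp
  qed
  have "r ` {..<m} \<subseteq> real_zeros q"
    using r by (auto simp: real_zeros_def)
  moreover have "card (real_zeros q) \<le> card (r ` {..<m})"
    using card_poly_roots_bound[OF assms(1)] assms(2) strict_mono_on_imp_inj_on[OF mono]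
    by (simp add: real_zeros_def card_image)
  moreover have "finite (real_zeros q)"
    using poly_roots_finite[OF assms(1)] by (simp add: real_zeros_def)
  ultimately have "real_zeros q = r ` {..<m}"
    using card_seteq by blast
  with r mono show ?thesis
    using that by blast
qed

lemma zeros_interlace_alternating_signs:
  fixes q :: "real poly" and x :: "nat \<Rightarrow> real"
  assumes lq: "lead_coeff q > 0" and dq: "degree q = Suc n"
    and x_mono: "strict_mono_on {..<n} x"
    and sign_x: "\<And>k. k < n \<Longrightarrow> (-1) ^ (n - k) * poly q (x k) > 0"
  obtains r where "\<And>i. i < n \<Longrightarrow> r i < x i \<and> x i < r (Suc i)"
    and "strict_mono_on {..<Suc n} r" and "real_zeros q = r ` {..<Suc n}"
proof -
  \<comment> \<open>For \<open>n = 0\<close> the points \<open>x 0 = x (n - 1)\<close> are arbitrary and only serve as anchors.\<close>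
  have "x 0 \<le> x (n - 1)"
    using strict_mono_on_leD[OF x_mono, of 0 "n - 1"] by (cases n) auto
  then obtain L R where LR: "L < x 0" "x (n - 1) < R"
    and sign_L: "(-1) ^ Suc n * poly q L > 0" and sign_R: "poly q R > 0"
    using poly_signs_beyond[OF lq] dq by metis
  have x_bounds: "L < x k \<and> x k < R" if "k < n" for k
    using LR strict_mono_on_leD[OF x_mono, of 0 k] strict_mono_on_leD[OF x_mono, of k "n - 1"] that
    by fastforce
  define t where "t i = (if i = 0 then L else if i \<le> n then x (i - 1) else R)" for i
  have t_sign: "(-1) ^ (Suc n - i) * poly q (t i) > 0" if "i \<le> Suc n" for i
    using sign_L sign_R sign_x[of "i - 1"] that by (auto simp: t_def)
  have "t i < t (Suc i) \<and> poly q (t i) * poly q (t (Suc i)) < 0" if "i < Suc n" for i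
  proof
    show "t i < t (Suc i)"
      using that x_bounds strict_mono_on_less[OF x_mono, of "i - 1" i] LR
      by (auto simp: t_def)
    show "poly q (t i) * poly q (t (Suc i)) < 0"
      using t_sign[of i] t_sign[of "Suc i"] that
      by (intro alternating_signs_mult_neg[of "n - i"]) (simp_all add: Suc_diff_le)
  qed
  moreover have "q \<noteq> 0"
    using lq by auto
  ultimately obtain r where r_t: "\<And>i. i < Suc n \<Longrightarrow> t i < r i \<and> r i < t (Suc i)"
    and "strict_mono_on {..<Suc n} r" "real_zeros q = r ` {..<Suc n}"
    using zeros_between_sign_changes[OF _ dq] by metis
  moreover have "r i < x i \<and> x i < r (Suc i)" if "i < n" for i
    using r_t[of i] r_t[of "Suc i"] that by (simp add: t_def)
  ultimately show ?thesis
    using that by blast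
qed

lemma
  fixes p :: "'a::{idom,ring_char_0} poly"
  assumes "p \<noteq> 0" "b \<noteq> 0"
  shows degree_linear_mult_minus_pderiv: "degree ([:a, b:] * p - pderiv p) = Suc (degree p)"
    and lead_coeff_linear_mult_minus_pderiv: "lead_coeff ([:a, b:] * p - pderiv p) = b * lead_coeff p"
proof -
  let ?m = "[:a, b:] * p"
  have deg_mult: "degree ?m = Suc (degree p)"
    using assms by (subst degree_mult_eq) auto
  moreover have "degree (pderiv p) < Suc (degree p)"
    by (simp add: degree_pderiv)
  ultimately have low: "degree (- pderiv p) < degree ?m"
    by simp
  have "degree (?m + - pderiv p) = degree ?m"
    using low by (rule degree_add_eq_left)
  then show "degree (?m - pderiv p) = Suc (degree p)"
    using deg_mult by simp
  have "lead_coeff (- pderiv p + ?m) = lead_coeff ?m"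
    using low by (rule lead_coeff_add_le)
  then have "lead_coeff (?m - pderiv p) = lead_coeff ?m"
    by (simp only: diff_conv_add_uminus add.commute)
  also have "\<dots> = b * lead_coeff p"
    using assms(2) by (simp only: lead_coeff_mult) simp
  finally show "lead_coeff (?m - pderiv p) = b * lead_coeff p" .
qed

lemma interlacing_step:
  fixes p :: "real poly" and a b :: real
  assumes lc: "lead_coeff p > 0" and zeros: "card (real_zeros p) = degree p" and "b > 0"
  defines "q \<equiv> [:a, b:] * p - pderiv p"
  shows "card (real_zeros q) = degree q \<and> interlaces (real_zeros q) (real_zeros p)"
proof -
  define n where "n = degree p"
  have p0: "p \<noteq> 0"
    using lc by auto
  then have "finite (real_zeros p)"
    by (simp add: real_zeros_def poly_roots_finite)
  then obtain x where x_mono: "strict_mono_on {..<n} x" and zeros_p: "real_zeros p = x ` {..<n}"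
    using finite_strict_mono_enumeration zeros n_def by metis
  have dq: "degree q = Suc n"
    unfolding q_def n_def using \<open>b > 0\<close> by (intro degree_linear_mult_minus_pderiv[OF p0]) simp
  have "lead_coeff q = b * lead_coeff p"
    unfolding q_def using \<open>b > 0\<close> by (intro lead_coeff_linear_mult_minus_pderiv[OF p0]) simp
  with \<open>b > 0\<close> lc have lq: "lead_coeff q > 0"
    by simp
  have "(-1) ^ (n - k) * poly q (x k) > 0" if "k < n" for k
  proof -
    have "poly p (x k) = 0"
      using that zeros_p by (auto simp: real_zeros_def)
    then have "poly q (x k) = - poly (pderiv p) (x k)"
      by (simp add: q_def)
    moreover have "(-1) ^ (n - Suc k) * poly (pderiv p) (x k) > 0"
      using sign_pderiv_at_kth_zero[OF lc] x_mono zeros_p that by (simp add: n_def)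
    moreover have "n - k = Suc (n - Suc k)"
      using that by simp
    ultimately show ?thesis
      by simp
  qed
  then obtain r where "\<And>i. i < n \<Longrightarrow> r i < x i \<and> x i < r (Suc i)"
    and r_mono: "strict_mono_on {..<Suc n} r" and zeros_q: "real_zeros q = r ` {..<Suc n}"
    using zeros_interlace_alternating_signs[OF lq dq x_mono] by metis
  then have "interlaces (real_zeros q) (real_zeros p)"
    unfolding zeros_p zeros_q by (intro interlaces_interleaved)
  moreover have "card (real_zeros q) = degree q"
    using strict_mono_on_imp_inj_on[OF r_mono] by (simp add: zeros_q dq card_image)
  ultimately show ?thesis
    by blast
qed

lemma Hpoly_Suc_eq:
  "Hpoly phi psi (Suc n) = [:phi (Suc n), 2 + psi (Suc n):] * Hpoly phi psi n - pderiv (Hpoly phi psi n)"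
  by (simp add: algebra_simps smult_add_left[symmetric])

lemma Hpoly_distinct_real_zeros:
  assumes "\<forall>i\<ge>1. psi i > -2"
  shows "lead_coeff (Hpoly phi psi n) > 0 \<and> card (real_zeros (Hpoly phi psi n)) = degree (Hpoly phi psi n)"
proof (induction n)
  case 0
  then show ?case
    by (simp add: real_zeros_def)
next
  case (Suc n)
  let ?H = "Hpoly phi psi n" and ?c = "2 + psi (Suc n)"
  have c: "?c > 0"
    using assms[rule_format, of "Suc n"] by simp
  have "lead_coeff ([:phi (Suc n), ?c:] * ?H - pderiv ?H) = ?c * lead_coeff ?H"
    using Suc.IH c by (intro lead_coeff_linear_mult_minus_pderiv) auto
  moreover have "card (real_zeros ([:phi (Suc n), ?c:] * ?H - pderiv ?H))
      = degree ([:phi (Suc n), ?c:] * ?H - pderiv ?H)"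
    using interlacing_step[of ?H ?c] Suc.IH c by blast
  ultimately show ?case
    unfolding Hpoly_Suc_eq using Suc.IH c by simp
qed

theorem theorem3p3:
  fixes phi psi :: "nat \<Rightarrow> real" and n :: nat
  assumes "\<forall>i\<ge>1. psi i > -2"
  shows "real_simple_zeros (Hpoly phi psi n) \<and>
         interlaces (real_zeros (Hpoly phi psi (Suc n))) (real_zeros (Hpoly phi psi n))"
proof -
  have lc: "lead_coeff (Hpoly phi psi n) > 0"
    and zeros: "card (real_zeros (Hpoly phi psi n)) = degree (Hpoly phi psi n)"
    using Hpoly_distinct_real_zeros[OF assms] by blast+
  have "2 + psi (Suc n) > 0"
    using assms[rule_format, of "Suc n"] by simp
  then have "interlaces (real_zeros (Hpoly phi psi (Suc n))) (real_zeros (Hpoly phi psi n))"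
    unfolding Hpoly_Suc_eq using interlacing_step[OF lc zeros] by blast
  moreover have "real_simple_zeros (Hpoly phi psi n)"
    using lc zeros by (intro real_simple_zerosI) auto
  ultimately show ?thesis
    by blast
qed

end
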